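(* Let $\Phi$ be a first-order sentence, $A$ a unary predicate, $R$ a binary predicate, and $U$ and $B$ fresh unary and binary predicates, respectively, that do not occur in $\Phi$, and let $r,k$ be non-negative integers with $0 \le r < k$. Define $\Upsilon_1 = \forall x\, \exists^{=r, k} y : B(x, y)$, $\Upsilon_2 = (|U| = r)$, $\Upsilon_3 = \forall x \forall y : (A(x) \land B(x, y) \to U(y))$, $\Upsilon_4 = \forall x \forall y : \neg A(x) \to (B(x, y) \leftrightarrow R(x, y))$. Extend the weighting functions $(w,\bar w)$ by $w(U)=\bar w(U)=w(B)=\bar w(B)=1$. Then for every domain size $n$ with $r,k<n$, $$\mathsf{WFOMC}\big(\Phi \land \forall x : (A(x) \lor \exists^{=r,k} y : R(x, y)), n, w, \bar{w}\big) = \frac{1}{\binom{n}{r}} \mathsf{WFOMC}(\Phi \land \Upsilon_1 \land \Upsilon_2 \land \Upsilon_3 \land \Upsilon_4, n, w, \bar{w}).$$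
   Context: Function-free first-order logic over the domain $[n]=\{1,\dots,n\}$. $\exists^{=r,k} y:\phi(y)$ holds iff the number of domain elements $c$ with $\phi(c)$ is congruent to $r$ modulo $k$. $|U|=r$ is a cardinality constraint: exactly $r$ ground atoms $U(c)$ are true. A weighting is a pair of functions $w,\bar w$ from predicates to $\mathbb{R}$; the weight of a model (set of ground literals) is the product of $w(P)$ over its true ground literals of predicate $P$ and $\bar w(P)$ over its false ones; $\mathsf{WFOMC}(\Gamma,n,w,\bar w)$ is the sum of the weights of all models of $\Gamma$ over $[n]$. *)

theory Defs
  imports Complex_Main
begin

text \<open>A model is a set of ground atoms (p, tuple).\<close>

datatype 'p form =
    Atom 'p "nat list"
  | Top
  | Bot
  | Neg "'p form"
  | Conj "'p form" "'p form"
  | Disj "'p form" "'p form"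
  | Imp "'p form" "'p form"
  | Iff "'p form" "'p form"
  | Ex nat "'p form"
  | All nat "'p form"
  | ExMod nat nat nat "'p form"   \<comment> \<open>ExMod r k y phi:  exists^{=r,k} y : phi\<close>
  | CardEq 'p nat                 \<comment> \<open>CardEq U r:  |U| = r\<close>

fun fv :: "'p form \<Rightarrow> nat set" where
  "fv (Atom p vs) = set vs"
| "fv Top = {}"
| "fv Bot = {}"
| "fv (Neg f) = fv f"
| "fv (Conj f g) = fv f \<union> fv g"
| "fv (Disj f g) = fv f \<union> fv g"
| "fv (Imp f g) = fv f \<union> fv g"
| "fv (Iff f g) = fv f \<union> fv g"
| "fv (Ex x f) = fv f - {x}"
| "fv (All x f) = fv f - {x}"
| "fv (ExMod r k x f) = fv f - {x}"
| "fv (CardEq p r) = {}"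

fun preds :: "'p form \<Rightarrow> 'p set" where
  "preds (Atom p vs) = {p}"
| "preds Top = {}"
| "preds Bot = {}"
| "preds (Neg f) = preds f"
| "preds (Conj f g) = preds f \<union> preds g"
| "preds (Disj f g) = preds f \<union> preds g"
| "preds (Imp f g) = preds f \<union> preds g"
| "preds (Iff f g) = preds f \<union> preds g"
| "preds (Ex x f) = preds f"
| "preds (All x f) = preds f"
| "preds (ExMod r k x f) = preds f"
| "preds (CardEq p r) = {p}"

fun plain_fo :: "'p form \<Rightarrow> bool" where
  "plain_fo (Atom p vs) = True"
| "plain_fo Top = True"
| "plain_fo Bot = True"
| "plain_fo (Neg f) = plain_fo f"
| "plain_fo (Conj f g) = (plain_fo f \<and> plain_fo g)"
| "plain_fo (Disj f g) = (plain_fo f \<and> plain_fo g)"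
| "plain_fo (Imp f g) = (plain_fo f \<and> plain_fo g)"
| "plain_fo (Iff f g) = (plain_fo f \<and> plain_fo g)"
| "plain_fo (Ex x f) = plain_fo f"
| "plain_fo (All x f) = plain_fo f"
| "plain_fo (ExMod r k x f) = False"
| "plain_fo (CardEq p r) = False"

definition fo_sentence :: "'p form \<Rightarrow> bool" where
  "fo_sentence f \<longleftrightarrow> plain_fo f \<and> fv f = {}"

fun eval :: "nat \<Rightarrow> ('p \<times> nat list) set \<Rightarrow> (nat \<Rightarrow> nat) \<Rightarrow> 'p form \<Rightarrow> bool" where
  "eval n M e (Atom p vs) = ((p, map e vs) \<in> M)"
| "eval n M e Top = True"
| "eval n M e Bot = False"
| "eval n M e (Neg f) = (\<not> eval n M e f)"
| "eval n M e (Conj f g) = (eval n M e f \<and> eval n M e g)"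
| "eval n M e (Disj f g) = (eval n M e f \<or> eval n M e g)"
| "eval n M e (Imp f g) = (eval n M e f \<longrightarrow> eval n M e g)"
| "eval n M e (Iff f g) = (eval n M e f \<longleftrightarrow> eval n M e g)"
| "eval n M e (Ex x f) = (\<exists>c\<in>{1..n}. eval n M (e(x := c)) f)"
| "eval n M e (All x f) = (\<forall>c\<in>{1..n}. eval n M (e(x := c)) f)"
| "eval n M e (ExMod r k x f) =
     (card {c\<in>{1..n}. eval n M (e(x := c)) f} mod k = r mod k)"
| "eval n M e (CardEq p r) = (card {t. (p, t) \<in> M} = r)"

definition ground_atoms :: "('p \<Rightarrow> nat) \<Rightarrow> 'p set \<Rightarrow> nat \<Rightarrow> ('p \<times> nat list) set" where
  "ground_atoms ar V n = {(p, t). p \<in> V \<and> length t = ar p \<and> set t \<subseteq> {1..n}}"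

definition model_weight ::
  "('p \<Rightarrow> nat) \<Rightarrow> 'p set \<Rightarrow> nat \<Rightarrow> ('p \<Rightarrow> real) \<Rightarrow> ('p \<Rightarrow> real) \<Rightarrow> ('p \<times> nat list) set \<Rightarrow> real" where
  "model_weight ar V n w wb M =
     (\<Prod>g\<in>ground_atoms ar V n. if g \<in> M then w (fst g) else wb (fst g))"

text \<open>The sentence is
evaluated in an arbitrary fixed environment (irrelevant for sentences).\<close>
definition WFOMC ::
  "('p \<Rightarrow> nat) \<Rightarrow> 'p form \<Rightarrow> nat \<Rightarrow> ('p \<Rightarrow> real) \<Rightarrow> ('p \<Rightarrow> real) \<Rightarrow> real" where
  "WFOMC ar \<Gamma> n w wb =
     (\<Sum>M\<in>{M. M \<subseteq> ground_atoms ar (preds \<Gamma>) n \<and> eval n M (\<lambda>_. 1) \<Gamma>}.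
        model_weight ar (preds \<Gamma>) n w wb M)"

end

theory Submission imports Defs begin

text \<open>Forgetting \<open>U\<close> and \<open>B\<close> maps models of the reduced sentence to models of the original
  one without changing weights, as \<open>U\<close> and \<open>B\<close> have weight 1. Over a fixed model \<open>L\<close> of the
  original sentence, the models of the reduced sentence correspond bijectively to the \<open>r\<close>-subsets
  \<open>S\<close> of the domain: \<open>U\<close> is \<open>S\<close>, and \<open>B\<close> copies \<open>R\<close> on the rows \<open>x\<close> with \<open>\<not> A(x)\<close> and equals \<open>S\<close>
  on the rows with \<open>A(x)\<close>. So every fibre of the forgetful map has \<open>n choose r\<close> elements.\<close>

lemma eval_cong_preds:
  assumes "\<And>p t. p \<in> preds f \<Longrightarrow> (p, t) \<in> M \<longleftrightarrow> (p, t) \<in> M'"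
  shows "eval n M e f = eval n M' e f"
  using assms by (induction f arbitrary: e) auto

lemma finite_preds: "finite (preds f)"
  by (induction f) auto

lemma mem_ground_atoms:
  "(p, t) \<in> ground_atoms ar V n \<longleftrightarrow> p \<in> V \<and> length t = ar p \<and> set t \<subseteq> {1..n}"
  by (simp add: ground_atoms_def)

lemma finite_ground_atoms: "finite V \<Longrightarrow> finite (ground_atoms ar V n)"
proof -
  assume "finite V"
  have "ground_atoms ar V n = (\<Union>p\<in>V. {p} \<times> {t. set t \<subseteq> {1..n} \<and> length t = ar p})"
    unfolding ground_atoms_def by auto
  then show ?thesis using \<open>finite V\<close> by (simp add: finite_lists_length_eq)
qed

lemma ground_atoms_Un: "ground_atoms ar (V \<union> W) n = ground_atoms ar V n \<union> ground_atoms ar W n"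
  by (auto simp: ground_atoms_def)

lemma ground_atom_unary:
  "(p, t) \<in> ground_atoms ar V n \<Longrightarrow> ar p = 1 \<Longrightarrow> \<exists>u\<in>{1..n}. t = [u]"
  by (auto simp: ground_atoms_def length_Suc_conv)

lemma ground_atom_binary:
  "(p, t) \<in> ground_atoms ar V n \<Longrightarrow> ar p = 2 \<Longrightarrow> \<exists>c\<in>{1..n}. \<exists>d\<in>{1..n}. t = [c, d]"
  by (auto simp: ground_atoms_def length_Suc_conv numeral_2_eq_2)

lemma model_weight_neutral_preds:
  assumes "finite V" "finite W" "V \<inter> W = {}" and "\<And>p. p \<in> W \<Longrightarrow> w p = 1 \<and> wb p = 1"
  shows "model_weight ar (V \<union> W) n w wb M = model_weight ar V n w wb (M \<inter> ground_atoms ar V n)"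
proof -
  let ?f = "\<lambda>M g. if g \<in> M then w (fst g) else wb (fst g)"
  have disj: "ground_atoms ar V n \<inter> ground_atoms ar W n = {}"
    using assms(3) by (auto simp: ground_atoms_def)
  have "(\<Prod>g\<in>ground_atoms ar W n. ?f M g) = 1"
    using assms(4) by (intro prod.neutral) (auto simp: ground_atoms_def)
  then have "model_weight ar (V \<union> W) n w wb M = (\<Prod>g\<in>ground_atoms ar V n. ?f M g)"
    unfolding model_weight_def ground_atoms_Un
    by (simp add: prod.union_disjoint[OF _ _ disj] finite_ground_atoms assms(1,2))
  also have "\<dots> = model_weight ar V n w wb (M \<inter> ground_atoms ar V n)"
    unfolding model_weight_def by (intro prod.cong) auto
  finally show ?thesis .
qed

definition models :: "('p \<Rightarrow> nat) \<Rightarrow> 'p form \<Rightarrow> nat \<Rightarrow> ('p \<times> nat list) set set" where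
  "models ar \<Gamma> n = {M. M \<subseteq> ground_atoms ar (preds \<Gamma>) n \<and> eval n M (\<lambda>_. 1) \<Gamma>}"

lemma WFOMC_models:
  "WFOMC ar \<Gamma> n w wb = (\<Sum>M\<in>models ar \<Gamma> n. model_weight ar (preds \<Gamma>) n w wb M)"
  by (simp add: WFOMC_def models_def)

lemma finite_models: "finite (models ar \<Gamma> n)"
  by (rule finite_subset[of _ "Pow (ground_atoms ar (preds \<Gamma>) n)"])
     (auto simp: models_def finite_ground_atoms finite_preds)

lemma sum_fibres_const_card:
  fixes g :: "'a \<Rightarrow> 'c::comm_semiring_1"
  assumes "finite S" "finite T" "\<pi> ` T \<subseteq> S"
    and "\<And>x. x \<in> T \<Longrightarrow> g x = f (\<pi> x)"
    and "\<And>y. y \<in> S \<Longrightarrow> card {x \<in> T. \<pi> x = y} = m"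
  shows "sum g T = of_nat m * sum f S"
proof -
  have "sum g T = (\<Sum>y\<in>S. sum g {x \<in> T. \<pi> x = y})"
    using assms(1-3) by (intro sum.group[symmetric]) auto
  also have "\<dots> = (\<Sum>y\<in>S. of_nat m * f y)"
  proof (intro sum.cong refl)
    fix y assume "y \<in> S"
    have "sum g {x \<in> T. \<pi> x = y} = (\<Sum>x\<in>{x \<in> T. \<pi> x = y}. f y)"
      using assms(4) by (intro sum.cong) auto
    then show "sum g {x \<in> T. \<pi> x = y} = of_nat m * f y"
      using assms(5)[OF \<open>y \<in> S\<close>] by simp
  qed
  finally show ?thesis by (simp add: sum_distrib_left)
qed

locale mod_counting_reduction =
  fixes ar :: "'p \<Rightarrow> nat" and \<Phi> :: "'p form" and A R U B :: 'p and r k n :: nat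
  assumes ar_A: "ar A = 1" and ar_R: "ar R = 2" and ar_U: "ar U = 1" and ar_B: "ar B = 2"
    and U_fresh: "U \<notin> preds \<Phi>" and B_fresh: "B \<notin> preds \<Phi>"
    and U_neq: "U \<noteq> A" "U \<noteq> R" and B_neq: "B \<noteq> A" "B \<noteq> R"
    and r_less_k: "r < k"
begin

definition mod_sentence :: "'p form" where
  "mod_sentence = Conj \<Phi> (All 0 (Disj (Atom A [0]) (ExMod r k 1 (Atom R [0, 1]))))"

definition reduced_sentence :: "'p form" where
  "reduced_sentence =
     Conj \<Phi>
       (Conj (All 0 (ExMod r k 1 (Atom B [0, 1])))
         (Conj (CardEq U r)
           (Conj (All 0 (All 1 (Imp (Conj (Atom A [0]) (Atom B [0, 1])) (Atom U [1]))))
                 (All 0 (All 1 (Imp (Neg (Atom A [0])) (Iff (Atom B [0, 1]) (Atom R [0, 1]))))))))"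

abbreviation atoms :: "('p \<times> nat list) set" where
  "atoms \<equiv> ground_atoms ar (preds mod_sentence) n"

definition row :: "'p \<Rightarrow> ('p \<times> nat list) set \<Rightarrow> nat \<Rightarrow> nat set" where
  "row P M c = {d \<in> {1..n}. (P, [c, d]) \<in> M}"

definition U_elems :: "('p \<times> nat list) set \<Rightarrow> nat set" where
  "U_elems M = {u. (U, [u]) \<in> M}"

definition r_subsets :: "nat set set" where
  "r_subsets = {S. S \<subseteq> {1..n} \<and> card S = r}"

definition extend :: "('p \<times> nat list) set \<Rightarrow> nat set \<Rightarrow> ('p \<times> nat list) set" where
  "extend L S = L \<union> (\<lambda>u. (U, [u])) ` S \<union>
     {(B, [c, d]) | c d. c \<in> {1..n} \<and> d \<in> {1..n} \<and>
        (if (A, [c]) \<in> L then d \<in> S else (R, [c, d]) \<in> L)}"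

lemma preds_mod_sentence: "preds mod_sentence = insert A (insert R (preds \<Phi>))"
  by (auto simp: mod_sentence_def)

lemma preds_reduced_sentence: "preds reduced_sentence = preds mod_sentence \<union> {U, B}"
  by (auto simp: mod_sentence_def reduced_sentence_def)

lemma U_neq_B: "U \<noteq> B"
  using ar_U ar_B by auto

lemma U_B_notin_preds_mod_sentence: "U \<notin> preds mod_sentence" "B \<notin> preds mod_sentence"
  using U_fresh B_fresh U_neq B_neq by (auto simp: preds_mod_sentence)

lemma eval_mod_sentence_iff:
  "eval n M e mod_sentence \<longleftrightarrow>
     eval n M e \<Phi> \<and> (\<forall>c\<in>{1..n}. (A, [c]) \<in> M \<or> card (row R M c) mod k = r)"
  using r_less_k by (simp add: mod_sentence_def row_def)

lemma eval_reduced_sentence_iff: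
  "eval n M e reduced_sentence \<longleftrightarrow>
     eval n M e \<Phi> \<and> (\<forall>c\<in>{1..n}. card (row B M c) mod k = r) \<and> card {t. (U, t) \<in> M} = r \<and>
     (\<forall>c\<in>{1..n}. \<forall>d\<in>{1..n}. (A, [c]) \<in> M \<and> (B, [c, d]) \<in> M \<longrightarrow> (U, [d]) \<in> M) \<and>
     (\<forall>c\<in>{1..n}. \<forall>d\<in>{1..n}. (A, [c]) \<notin> M \<longrightarrow> ((B, [c, d]) \<in> M \<longleftrightarrow> (R, [c, d]) \<in> M))"
  using r_less_k by (simp add: reduced_sentence_def row_def)

lemma U_atoms_eq_image:
  "M \<subseteq> ground_atoms ar V n \<Longrightarrow> {t. (U, t) \<in> M} = (\<lambda>u. [u]) ` U_elems M"
  using ground_atom_unary[of U _ ar V n, OF _ ar_U] by (fastforce simp: U_elems_def)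

lemma card_U_atoms:
  "M \<subseteq> ground_atoms ar V n \<Longrightarrow> card {t. (U, t) \<in> M} = card (U_elems M)"
  by (simp add: U_atoms_eq_image card_image inj_on_def)

lemma reduced_atoms: "ground_atoms ar (preds reduced_sentence) n = atoms \<union> ground_atoms ar {U, B} n"
  unfolding preds_reduced_sentence ground_atoms_Un ..

lemma mem_inter_atoms_iff:
  assumes "M \<subseteq> ground_atoms ar (preds reduced_sentence) n" "p \<noteq> U" "p \<noteq> B"
  shows "(p, t) \<in> M \<inter> atoms \<longleftrightarrow> (p, t) \<in> M"
  using assms(1)[THEN subsetD, of "(p, t)"] assms(2,3) by (auto simp: reduced_atoms mem_ground_atoms)

lemma eval_\<Phi>_inter_atoms:
  assumes "M \<subseteq> ground_atoms ar (preds reduced_sentence) n"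
  shows "eval n (M \<inter> atoms) e \<Phi> = eval n M e \<Phi>"
  using assms U_fresh B_fresh
  by (intro eval_cong_preds) (metis mem_inter_atoms_iff)

lemma restrict_in_models:
  assumes M: "M \<in> models ar reduced_sentence n"
  shows "M \<inter> atoms \<in> models ar mod_sentence n"
proof -
  have MGA: "M \<subseteq> ground_atoms ar (preds reduced_sentence) n"
    and eval_M: "eval n M (\<lambda>_. 1) reduced_sentence"
    using M by (auto simp: models_def)
  have "(A, [c]) \<in> M \<inter> atoms \<or> card (row R (M \<inter> atoms) c) mod k = r" if c: "c \<in> {1..n}" for c
  proof (cases "(A, [c]) \<in> M")
    case True
    then show ?thesis using mem_inter_atoms_iff[OF MGA] U_neq B_neq by metis
  next
    case False
    have "row R (M \<inter> atoms) c = row B M c"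
      using eval_M False c mem_inter_atoms_iff[OF MGA] U_neq B_neq
      by (auto simp: eval_reduced_sentence_iff row_def)
    then show ?thesis using eval_M c by (simp add: eval_reduced_sentence_iff)
  qed
  then show ?thesis
    using eval_M eval_\<Phi>_inter_atoms[OF MGA]
    by (simp add: models_def eval_mod_sentence_iff eval_reduced_sentence_iff)
qed

lemma extend_other_atom: "p \<noteq> U \<Longrightarrow> p \<noteq> B \<Longrightarrow> (p, t) \<in> extend L S \<longleftrightarrow> (p, t) \<in> L"
  by (auto simp: extend_def)

lemma U_atom_extend:
  "L \<subseteq> atoms \<Longrightarrow> (U, t) \<in> extend L S \<longleftrightarrow> (\<exists>u\<in>S. t = [u])"
  using U_B_notin_preds_mod_sentence U_neq_B by (auto simp: extend_def mem_ground_atoms)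

lemma B_atom_extend:
  "L \<subseteq> atoms \<Longrightarrow> (B, t) \<in> extend L S \<longleftrightarrow>
     (\<exists>c\<in>{1..n}. \<exists>d\<in>{1..n}. t = [c, d] \<and> (if (A, [c]) \<in> L then d \<in> S else (R, [c, d]) \<in> L))"
proof -
  assume "L \<subseteq> atoms"
  then have "(B, t) \<notin> L"
    using U_B_notin_preds_mod_sentence by (auto simp: mem_ground_atoms)
  then show ?thesis
    using U_neq_B unfolding extend_def by blast
qed

lemma U_elems_extend: "L \<subseteq> atoms \<Longrightarrow> U_elems (extend L S) = S"
  by (simp add: U_elems_def U_atom_extend)

lemma extend_inter_atoms: "L \<subseteq> atoms \<Longrightarrow> extend L S \<inter> atoms = L"
  using U_B_notin_preds_mod_sentence by (auto simp: extend_def mem_ground_atoms)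

lemma row_B_extend:
  assumes "L \<subseteq> atoms" "S \<subseteq> {1..n}" "c \<in> {1..n}"
  shows "row B (extend L S) c = (if (A, [c]) \<in> L then S else row R L c)"
  using assms(2,3) B_atom_extend[OF assms(1)] by (auto simp: row_def)

lemma extend_in_models:
  assumes L: "L \<in> models ar mod_sentence n" and S: "S \<in> r_subsets"
  shows "extend L S \<in> models ar reduced_sentence n"
proof -
  define M where "M = extend L S"
  have LGA: "L \<subseteq> atoms" and eval_L: "eval n L (\<lambda>_. 1) mod_sentence"
    using L by (auto simp: models_def)
  have S_sub: "S \<subseteq> {1..n}" and card_S: "card S = r"
    using S by (auto simp: r_subsets_def)
  have "M - L \<subseteq> ground_atoms ar {U, B} n"
    using S_sub ar_U ar_B by (auto simp: M_def extend_def mem_ground_atoms)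
  then have MGA: "M \<subseteq> ground_atoms ar (preds reduced_sentence) n"
    using LGA by (auto simp: reduced_atoms)
  have "eval n M (\<lambda>_. 1) \<Phi>"
    using eval_\<Phi>_inter_atoms[OF MGA] eval_L
    by (simp add: M_def extend_inter_atoms[OF LGA] eval_mod_sentence_iff)
  moreover have A_M: "(A, [c]) \<in> M \<longleftrightarrow> (A, [c]) \<in> L" for c
    using U_neq B_neq by (simp add: M_def extend_other_atom)
  moreover have "(R, t) \<in> M \<longleftrightarrow> (R, t) \<in> L" for t
    using U_neq B_neq by (simp add: M_def extend_other_atom)
  moreover have "card (row B M c) mod k = r" if "c \<in> {1..n}" for c
    using eval_L that card_S r_less_k
    by (auto simp: M_def row_B_extend[OF LGA S_sub that] eval_mod_sentence_iff)
  moreover have "card {t. (U, t) \<in> M} = r"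
    using card_U_atoms[OF MGA] card_S by (simp add: M_def U_elems_extend[OF LGA])
  moreover have "(U, [d]) \<in> M" if "(A, [c]) \<in> M" "(B, [c, d]) \<in> M" for c d
    using that A_M by (simp add: M_def B_atom_extend[OF LGA] U_atom_extend[OF LGA])
  ultimately have "eval n M (\<lambda>_. 1) reduced_sentence"
    by (simp add: eval_reduced_sentence_iff M_def B_atom_extend[OF LGA])
  then show ?thesis
    using MGA by (simp add: models_def M_def)
qed

lemma U_elems_in_r_subsets:
  assumes "M \<in> models ar reduced_sentence n"
  shows "U_elems M \<in> r_subsets"
proof -
  have MGA: "M \<subseteq> ground_atoms ar (preds reduced_sentence) n"
    using assms by (simp add: models_def)
  have "U_elems M \<subseteq> {1..n}"
    using MGA ar_U by (auto simp: U_elems_def mem_ground_atoms)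
  moreover have "card (U_elems M) = r"
    using assms card_U_atoms[OF MGA] by (simp add: models_def eval_reduced_sentence_iff)
  ultimately show ?thesis by (simp add: r_subsets_def)
qed

text \<open>On a row with \<open>A(c)\<close>, the constraint \<open>\<Upsilon>\<^sub>3\<close> puts the \<open>B\<close>-row inside \<open>U\<close>, which has \<open>r\<close>
  elements; its size is \<open>r\<close> modulo \<open>k > r\<close>, so it is exactly \<open>r\<close> and the row is all of \<open>U\<close>.\<close>
lemma row_B_eq_U_elems:
  assumes M: "M \<in> models ar reduced_sentence n" and c: "c \<in> {1..n}" "(A, [c]) \<in> M"
  shows "row B M c = U_elems M"
proof -
  have eval_M: "eval n M (\<lambda>_. 1) reduced_sentence"
    using M by (simp add: models_def)
  have card_U: "card (U_elems M) = r" and fin_U: "finite (U_elems M)"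
    using U_elems_in_r_subsets[OF M] by (auto simp: r_subsets_def finite_subset)
  have sub: "row B M c \<subseteq> U_elems M"
    using eval_M c by (auto simp: eval_reduced_sentence_iff row_def U_elems_def)
  then have "card (row B M c) \<le> r"
    using card_mono[OF fin_U] card_U by metis
  moreover have "card (row B M c) mod k = r"
    using eval_M c by (simp add: eval_reduced_sentence_iff)
  ultimately have "card (row B M c) = r"
    using r_less_k by simp
  then show ?thesis
    using card_subset_eq[OF fin_U sub] card_U by simp
qed

lemma reduced_model_eq_extend:
  assumes M: "M \<in> models ar reduced_sentence n"
  shows "M = extend (M \<inter> atoms) (U_elems M)"
proof -
  define L where "L = M \<inter> atoms"
  have MGA: "M \<subseteq> ground_atoms ar (preds reduced_sentence) n"
    and eval_M: "eval n M (\<lambda>_. 1) reduced_sentence"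
    using M by (auto simp: models_def)
  have LGA: "L \<subseteq> atoms" by (simp add: L_def)
  have L_iff: "(p, t) \<in> L \<longleftrightarrow> (p, t) \<in> M" if "p \<noteq> U" "p \<noteq> B" for p t
    using mem_inter_atoms_iff[OF MGA that] by (simp add: L_def)
  have "(p, t) \<in> M \<longleftrightarrow> (p, t) \<in> extend L (U_elems M)" for p t
  proof -
    consider "p = U" | "p = B" | "p \<noteq> U" "p \<noteq> B" by blast
    then show ?thesis
    proof cases
      case 1
      have "(U, t) \<in> M \<longleftrightarrow> (\<exists>u\<in>U_elems M. t = [u])"
        using U_atoms_eq_image[OF MGA] by blast
      then show ?thesis using 1 by (simp add: U_atom_extend[OF LGA])
    next
      case 2
      have "(B, [c, d]) \<in> M \<longleftrightarrow> (if (A, [c]) \<in> L then d \<in> U_elems M else (R, [c, d]) \<in> L)"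
        if "c \<in> {1..n}" "d \<in> {1..n}" for c d
        using that row_B_eq_U_elems[OF M] eval_M L_iff U_neq B_neq
        by (auto simp: row_def eval_reduced_sentence_iff)
      moreover have "(B, t) \<in> M \<longleftrightarrow> (\<exists>c\<in>{1..n}. \<exists>d\<in>{1..n}. t = [c, d] \<and> (B, [c, d]) \<in> M)"
        using MGA ground_atom_binary[of B t ar _ n, OF _ ar_B] by blast
      ultimately show ?thesis using 2 by (simp add: B_atom_extend[OF LGA])
    next
      case 3
      then show ?thesis by (simp add: L_iff extend_other_atom)
    qed
  qed
  then show ?thesis
    by (auto simp: L_def)
qed

lemma reduced_models_fibre:
  assumes "L \<in> models ar mod_sentence n"
  shows "{M \<in> models ar reduced_sentence n. M \<inter> atoms = L} = extend L ` r_subsets"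
proof -
  have LGA: "L \<subseteq> atoms"
    using assms by (simp add: models_def)
  have "M \<in> extend L ` r_subsets" if "M \<in> models ar reduced_sentence n" "M \<inter> atoms = L" for M
    using reduced_model_eq_extend[OF that(1)] U_elems_in_r_subsets[OF that(1)] that(2) by auto
  then show ?thesis
    using extend_in_models[OF assms] extend_inter_atoms[OF LGA] by blast
qed

lemma card_reduced_models_fibre:
  assumes "L \<in> models ar mod_sentence n"
  shows "card {M \<in> models ar reduced_sentence n. M \<inter> atoms = L} = n choose r"
proof -
  have LGA: "L \<subseteq> atoms"
    using assms by (simp add: models_def)
  have "inj_on (extend L) r_subsets"
    by (metis U_elems_extend[OF LGA] inj_onI)
  then show ?thesis
    by (simp add: reduced_models_fibre[OF assms] card_image r_subsets_def n_subsets)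
qed

lemma WFOMC_reduced_sentence:
  assumes "w U = 1" "wb U = 1" "w B = 1" "wb B = 1"
  shows "WFOMC ar reduced_sentence n w wb = real (n choose r) * WFOMC ar mod_sentence n w wb"
  unfolding WFOMC_models
proof (rule sum_fibres_const_card[where \<pi> = "\<lambda>M. M \<inter> atoms"])
  show "(\<lambda>M. M \<inter> atoms) ` models ar reduced_sentence n \<subseteq> models ar mod_sentence n"
    using restrict_in_models by blast
  show "model_weight ar (preds reduced_sentence) n w wb M =
      model_weight ar (preds mod_sentence) n w wb (M \<inter> atoms)" for M
    unfolding preds_reduced_sentence
    using assms U_B_notin_preds_mod_sentence
    by (intro model_weight_neutral_preds) (auto simp: finite_preds)
qed (simp_all add: finite_models card_reduced_models_fibre)

end

theorem lemma3:
  fixes ar :: "'p \<Rightarrow> nat" and \<Phi> :: "'p form" and A R U B :: 'p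
    and r k n :: nat and w wb :: "'p \<Rightarrow> real"
  assumes "fo_sentence \<Phi>"
    and "ar A = 1" and "ar R = 2" and "ar U = 1" and "ar B = 2"
    and "U \<notin> preds \<Phi>" and "B \<notin> preds \<Phi>"
    and "U \<noteq> A" and "U \<noteq> R" and "B \<noteq> A" and "B \<noteq> R"
    and "r < k" and "r < n" and "k < n"
    and "w U = 1" and "wb U = 1" and "w B = 1" and "wb B = 1"
  shows "WFOMC ar (Conj \<Phi> (All 0 (Disj (Atom A [0]) (ExMod r k 1 (Atom R [0, 1]))))) n w wb
       = 1 / real (n choose r) *
         WFOMC ar
           (Conj \<Phi>
             (Conj (All 0 (ExMod r k 1 (Atom B [0, 1])))
               (Conj (CardEq U r)
                 (Conj (All 0 (All 1 (Imp (Conj (Atom A [0]) (Atom B [0, 1])) (Atom U [1]))))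
                       (All 0 (All 1 (Imp (Neg (Atom A [0])) (Iff (Atom B [0, 1]) (Atom R [0, 1])))))))))
           n w wb"
proof -
  interpret mod_counting_reduction ar \<Phi> A R U B r k n
    using assms(2-12) by unfold_locales
  have "real (n choose r) > 0"
    using assms(13) by simp
  with WFOMC_reduced_sentence[OF assms(15-18)] show ?thesis
    by (simp add: mod_sentence_def reduced_sentence_def)
qed

end
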